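(* Let $\{g_k\}_{k\ge1}\subset\mathbb{R}^{+}\cup\{0\}$ and for $n=1,2,\dots$ define $\Gamma_{(n)}:\mathcal{O}\to\mathcal{O}$ by $$\Gamma_{(n)}\varphi(x)=\frac{\varphi(x)\exp\!\left(x\sum_{k=1}^{n}g_k\right)}{\sum_{y\in E_\varphi}\varphi(y)\exp\!\left(y\sum_{k=1}^{n}g_k\right)},\qquad x\in\mathbb{R}.$$ Then for any NFD $\varphi\in\mathcal{O}$ with $E_\varphi\subset[0,\infty)$ and any positive integers $n>m$, $$d\big(\Gamma_{(n)}\varphi,\Gamma_{(m)}\varphi\big)\le\sum_{x\in E_\varphi}\left(\exp\!\left(x\sum_{k=m+1}^{n}g_k\right)-1\right).$$
   Context: A normalized fitness distribution (NFD) is a function $\varphi:\mathbb{R}\to[0,1]$ whose support $E_\varphi=\{x:\varphi(x)\neq0\}$ is finite and which satisfies $\sum_{x\in E_\varphi}\varphi(x)=1$; $\mathcal{O}$ denotes the space of all NFDs. The metric $d$ on $\mathcal{O}$ is $d(\varphi_1,\varphi_2)=\sum_{x\in E_{\varphi_1}\cup E_{\varphi_2}}|\varphi_1(x)-\varphi_2(x)|$. In the paper, NFDs arise from populations with a fitness function $f:\Omega\to\mathbb{R}^{+}\cup\{0\}$, so fitness values are nonnegative. *)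

theory Defs
  imports "HOL-Analysis.Analysis"
begin

definition supp_nfd :: "(real \<Rightarrow> real) \<Rightarrow> real set" where
  "supp_nfd \<phi> = {x. \<phi> x \<noteq> 0}"

definition is_nfd :: "(real \<Rightarrow> real) \<Rightarrow> bool" where
  "is_nfd \<phi> \<longleftrightarrow> (\<forall>x. 0 \<le> \<phi> x \<and> \<phi> x \<le> 1) \<and> finite (supp_nfd \<phi>)
      \<and> (\<Sum>x\<in>supp_nfd \<phi>. \<phi> x) = 1"

definition nfd_dist :: "(real \<Rightarrow> real) \<Rightarrow> (real \<Rightarrow> real) \<Rightarrow> real" where
  "nfd_dist \<phi>1 \<phi>2 = (\<Sum>x\<in>supp_nfd \<phi>1 \<union> supp_nfd \<phi>2. \<bar>\<phi>1 x - \<phi>2 x\<bar>)"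

definition Gamma_n :: "(nat \<Rightarrow> real) \<Rightarrow> nat \<Rightarrow> (real \<Rightarrow> real) \<Rightarrow> (real \<Rightarrow> real)" where
  "Gamma_n g n \<phi> = (\<lambda>x. \<phi> x * exp (x * (\<Sum>k=1..n. g k)) /
      (\<Sum>y\<in>supp_nfd \<phi>. \<phi> y * exp (y * (\<Sum>k=1..n. g k))))"

end

theory Submission
  imports Defs
begin

(* Gamma_(n) phi is the reweighting of p = Gamma_(m) phi by w(x) = exp(x (g_(m+1) + ... + g_n)),
   and w >= 1 on the support because fitness values and the g_k are nonnegative. With
   c = w - 1 >= 0 and D = sum p c the reweighted distribution is p w / (1 + D), so pointwise
   |p w / (1 + D) - p| <= p |c - D|. The mean absolute deviation sum p |c - D| is at most sum c,
   because the term y = x drops out of c(x) - D = sum_y p(y) (c(x) - c(y)). *)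

definition reweight :: "(real \<Rightarrow> real) \<Rightarrow> (real \<Rightarrow> real) \<Rightarrow> real \<Rightarrow> real" where
  "reweight w \<phi> = (\<lambda>x. \<phi> x * w x / (\<Sum>y\<in>supp_nfd \<phi>. \<phi> y * w y))"

lemma Gamma_n_eq_reweight:
  "Gamma_n g n \<phi> = reweight (\<lambda>x. exp (x * (\<Sum>k=1..n. g k))) \<phi>"
  by (simp add: Gamma_n_def reweight_def)

lemma supp_reweight:
  assumes "(\<Sum>y\<in>supp_nfd \<phi>. \<phi> y * w y) \<noteq> 0" and "\<And>x. w x \<noteq> 0"
  shows "supp_nfd (reweight w \<phi>) = supp_nfd \<phi>"
  using assms by (auto simp: supp_nfd_def reweight_def)

lemma reweight_reweight:
  assumes "(\<Sum>y\<in>supp_nfd \<phi>. \<phi> y * u y) \<noteq> 0" and "\<And>x. u x \<noteq> 0"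
  shows "reweight v (reweight u \<phi>) = reweight (\<lambda>x. u x * v x) \<phi>"
proof
  fix x
  define Z where "Z = (\<Sum>y\<in>supp_nfd \<phi>. \<phi> y * u y)"
  have "reweight v (reweight u \<phi>) x
          = reweight u \<phi> x * v x / (\<Sum>y\<in>supp_nfd \<phi>. reweight u \<phi> y * v y)"
    by (simp add: reweight_def[of v] supp_reweight[OF assms])
  also have "(\<Sum>y\<in>supp_nfd \<phi>. reweight u \<phi> y * v y) = (\<Sum>y\<in>supp_nfd \<phi>. \<phi> y * (u y * v y)) / Z"
    by (simp add: reweight_def Z_def sum_divide_distrib mult.assoc)
  finally show "reweight v (reweight u \<phi>) x = reweight (\<lambda>x. u x * v x) \<phi> x"
    using assms(1) by (simp add: reweight_def Z_def[symmetric] mult.assoc)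
qed

lemma nfd_pos_on_supp:
  assumes "is_nfd \<phi>" and "x \<in> supp_nfd \<phi>"
  shows "\<phi> x > 0"
proof -
  have "\<phi> x \<ge> 0" and "\<phi> x \<noteq> 0"
    using assms by (auto simp: is_nfd_def supp_nfd_def)
  then show ?thesis by simp
qed

lemma nfd_reweight_normalizer_pos:
  assumes nfd: "is_nfd \<phi>" and w_pos: "\<And>x. x \<in> supp_nfd \<phi> \<Longrightarrow> w x > 0"
  shows "(\<Sum>y\<in>supp_nfd \<phi>. \<phi> y * w y) > 0"
proof (rule sum_pos)
  show "finite (supp_nfd \<phi>)" and "supp_nfd \<phi> \<noteq> {}"
    using nfd by (auto simp: is_nfd_def)
  show "\<phi> y * w y > 0" if "y \<in> supp_nfd \<phi>" for y
    using nfd_pos_on_supp[OF nfd that] w_pos[OF that] by simp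
qed

lemma is_nfd_reweight:
  assumes nfd: "is_nfd \<phi>" and w_pos: "\<And>x. w x > 0"
  shows "is_nfd (reweight w \<phi>)"
proof -
  define Z where "Z = (\<Sum>y\<in>supp_nfd \<phi>. \<phi> y * w y)"
  have Z_pos: "Z > 0"
    unfolding Z_def using nfd w_pos by (rule nfd_reweight_normalizer_pos)
  have supp: "supp_nfd (reweight w \<phi>) = supp_nfd \<phi>"
    using Z_pos w_pos by (intro supp_reweight) (auto simp: Z_def less_imp_neq[symmetric])
  have fin: "finite (supp_nfd \<phi>)" and nonneg: "\<And>x. 0 \<le> reweight w \<phi> x"
    using nfd Z_pos w_pos by (auto simp: is_nfd_def reweight_def Z_def[symmetric] less_imp_le)
  have sum1: "(\<Sum>x\<in>supp_nfd \<phi>. reweight w \<phi> x) = 1"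
    using Z_pos by (simp add: reweight_def Z_def[symmetric] sum_divide_distrib[symmetric])
  have "reweight w \<phi> x \<le> 1" for x
  proof (cases "x \<in> supp_nfd \<phi>")
    case True
    then show ?thesis
      using member_le_sum[OF True _ fin, of "reweight w \<phi>"] nonneg sum1 by simp
  next
    case False
    then show ?thesis by (simp add: reweight_def supp_nfd_def)
  qed
  with nonneg fin sum1 supp show ?thesis
    by (simp add: is_nfd_def)
qed

lemma abs_deviation_from_mean_le:
  fixes S :: "'a set" and p c :: "'a \<Rightarrow> real"
  assumes fin: "finite S" and p_nonneg: "\<And>y. y \<in> S \<Longrightarrow> p y \<ge> 0" and p_sum: "sum p S = 1"
    and c_nonneg: "\<And>y. y \<in> S \<Longrightarrow> c y \<ge> 0" and x: "x \<in> S"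
  shows "\<bar>c x - (\<Sum>y\<in>S. p y * c y)\<bar>
           \<le> (1 - p x) * c x + ((\<Sum>y\<in>S. p y * c y) - p x * c x)"
proof -
  let ?R = "S - {x}"
  have "c x - (\<Sum>y\<in>S. p y * c y) = (\<Sum>y\<in>S. p y * (c x - c y))"
    by (simp add: right_diff_distrib sum_subtractf sum_distrib_right[symmetric] p_sum)
  also have "\<dots> = (\<Sum>y\<in>?R. p y * (c x - c y))"
    using fin x by (simp add: sum.remove)
  finally have "\<bar>c x - (\<Sum>y\<in>S. p y * c y)\<bar> \<le> (\<Sum>y\<in>?R. \<bar>p y * (c x - c y)\<bar>)"
    by (simp add: sum_abs)
  also have "\<dots> \<le> (\<Sum>y\<in>?R. p y * (c x + c y))"
  proof (rule sum_mono)
    fix y assume "y \<in> ?R"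
    then have "p y \<ge> 0" and "\<bar>c x - c y\<bar> \<le> c x + c y"
      using p_nonneg c_nonneg[of y] c_nonneg[OF x] by (auto simp: abs_le_iff)
    then show "\<bar>p y * (c x - c y)\<bar> \<le> p y * (c x + c y)"
      by (simp add: abs_mult mult_left_mono)
  qed
  also have "\<dots> = sum p ?R * c x + (\<Sum>y\<in>?R. p y * c y)"
    by (simp add: distrib_left sum.distrib sum_distrib_right)
  also have "\<dots> = (1 - p x) * c x + ((\<Sum>y\<in>S. p y * c y) - p x * c x)"
    using fin x p_sum by (simp add: sum_diff1)
  finally show ?thesis .
qed

lemma mean_abs_deviation_le_sum:
  fixes S :: "'a set" and p c :: "'a \<Rightarrow> real"
  assumes fin: "finite S" and p_nonneg: "\<And>y. y \<in> S \<Longrightarrow> p y \<ge> 0" and p_sum: "sum p S = 1"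
    and c_nonneg: "\<And>y. y \<in> S \<Longrightarrow> c y \<ge> 0"
  shows "(\<Sum>x\<in>S. p x * \<bar>c x - (\<Sum>y\<in>S. p y * c y)\<bar>) \<le> sum c S"
proof -
  define D where "D = (\<Sum>y\<in>S. p y * c y)"
  have "(\<Sum>x\<in>S. p x * \<bar>c x - D\<bar>) \<le> (\<Sum>x\<in>S. p x * ((1 - p x) * c x + (D - p x * c x)))"
    using abs_deviation_from_mean_le[OF fin p_nonneg p_sum c_nonneg]
    by (intro sum_mono mult_left_mono) (auto simp: D_def p_nonneg)
  also have "\<dots> = (\<Sum>x\<in>S. p x * c x - 2 * (p x * p x * c x)) + D * sum p S"
  proof -
    have "p x * ((1 - p x) * c x + (D - p x * c x)) = (p x * c x - 2 * (p x * p x * c x)) + D * p x"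
      for x
      by (simp add: algebra_simps)
    then show ?thesis by (simp add: sum.distrib sum_distrib_left)
  qed
  also have "\<dots> = 2 * D - 2 * (\<Sum>x\<in>S. p x * p x * c x)"
    by (simp add: p_sum D_def sum_subtractf sum_distrib_left)
  also have "\<dots> = (\<Sum>x\<in>S. 2 * p x * (1 - p x) * c x)"
    by (simp add: D_def algebra_simps sum_subtractf sum_distrib_left)
  also have "\<dots> \<le> sum c S"
  proof (rule sum_mono)
    fix x assume "x \<in> S"
    have "2 * p x * (1 - p x) \<le> 1"
      using zero_le_square[of "2 * p x - 1"] by (simp add: algebra_simps)
    then show "2 * p x * (1 - p x) * c x \<le> c x"
      using mult_right_mono[OF _ c_nonneg[OF \<open>x \<in> S\<close>]] by fastforce
  qed
  finally show ?thesis by (simp add: D_def)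
qed

lemma nfd_dist_reweight_le:
  assumes nfd: "is_nfd \<phi>" and w_ge: "\<And>x. x \<in> supp_nfd \<phi> \<Longrightarrow> w x \<ge> 1"
    and w_pos: "\<And>x. w x > 0"
  shows "nfd_dist (reweight w \<phi>) \<phi> \<le> (\<Sum>x\<in>supp_nfd \<phi>. w x - 1)"
proof -
  define S where "S = supp_nfd \<phi>"
  define Z where "Z = (\<Sum>y\<in>S. \<phi> y * w y)"
  have fin: "finite S" and nonneg: "\<And>x. \<phi> x \<ge> 0" and sum1: "sum \<phi> S = 1"
    using nfd by (auto simp: is_nfd_def S_def)
  have Z_eq: "Z = 1 + (\<Sum>y\<in>S. \<phi> y * (w y - 1))"
    by (simp add: Z_def right_diff_distrib sum_subtractf sum1)
  have Z_ge: "Z \<ge> 1"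
    unfolding Z_eq using w_ge nonneg by (auto simp: S_def intro!: sum_nonneg)
  have supp: "supp_nfd (reweight w \<phi>) = S"
    unfolding S_def by (rule supp_reweight) (use Z_ge in \<open>simp add: Z_def S_def\<close>, metis w_pos less_irrefl)
  have pointwise: "\<bar>reweight w \<phi> x - \<phi> x\<bar> \<le> \<phi> x * \<bar>(w x - 1) - (Z - 1)\<bar>" for x
  proof -
    have "reweight w \<phi> x - \<phi> x = \<phi> x * (w x - Z) / Z"
      using Z_ge by (simp add: reweight_def S_def[symmetric] Z_def[symmetric] field_simps)
    then have "\<bar>reweight w \<phi> x - \<phi> x\<bar> = \<phi> x * \<bar>w x - Z\<bar> / Z"
      using Z_ge nonneg[of x] by (simp add: abs_mult)
    also have "\<dots> \<le> \<phi> x * \<bar>w x - Z\<bar>"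
      using divide_left_mono[OF Z_ge, of "\<phi> x * \<bar>w x - Z\<bar>"] Z_ge nonneg[of x] by simp
    finally show ?thesis by simp
  qed
  have "nfd_dist (reweight w \<phi>) \<phi> = (\<Sum>x\<in>S. \<bar>reweight w \<phi> x - \<phi> x\<bar>)"
    by (simp add: nfd_dist_def supp S_def)
  also have "\<dots> \<le> (\<Sum>x\<in>S. \<phi> x * \<bar>(w x - 1) - (\<Sum>y\<in>S. \<phi> y * (w y - 1))\<bar>)"
    using pointwise by (simp add: sum_mono Z_eq)
  also have "\<dots> \<le> (\<Sum>x\<in>S. w x - 1)"
    using w_ge by (intro mean_abs_deviation_le_sum[OF fin _ sum1]) (auto simp: nonneg S_def)
  finally show ?thesis by (simp add: S_def)
qed

theorem lemma2:
  fixes g :: "nat \<Rightarrow> real" and \<phi> :: "real \<Rightarrow> real" and n m :: nat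
  assumes g_nonneg: "\<And>k. k \<ge> 1 \<Longrightarrow> g k \<ge> 0"
    and nfd: "is_nfd \<phi>"
    and supp_nonneg: "supp_nfd \<phi> \<subseteq> {0..}"
    and m_pos: "m \<ge> 1" and mn: "m < n"
  shows "nfd_dist (Gamma_n g n \<phi>) (Gamma_n g m \<phi>)
           \<le> (\<Sum>x\<in>supp_nfd \<phi>. exp (x * (\<Sum>k=m+1..n. g k)) - 1)"
proof -
  define H where "H = (\<Sum>k=m+1..n. g k)"
  define u where "u x = exp (x * (\<Sum>k=1..m. g k))" for x
  define w where "w x = exp (x * H)" for x
  have w_pos: "w x > 0" for x
    by (simp add: w_def)
  have "(\<Sum>k=1..n. g k) = (\<Sum>k=1..m. g k) + H"
    using sum.ub_add_nat[of 1 m g "n - m"] mn by (simp add: H_def)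
  then have Gamma_n_n: "Gamma_n g n \<phi> = reweight w (Gamma_n g m \<phi>)"
    using nfd_reweight_normalizer_pos[OF nfd, of u]
    by (simp add: Gamma_n_eq_reweight reweight_reweight u_def w_def distrib_left exp_add)
  have supp_m: "supp_nfd (Gamma_n g m \<phi>) = supp_nfd \<phi>"
    using nfd_reweight_normalizer_pos[OF nfd, of u]
    by (simp add: Gamma_n_eq_reweight supp_reweight u_def)
  have nfd_m: "is_nfd (Gamma_n g m \<phi>)"
    unfolding Gamma_n_eq_reweight using nfd by (rule is_nfd_reweight) simp
  have "H \<ge> 0"
    unfolding H_def by (rule sum_nonneg) (simp add: g_nonneg)
  then have w_ge: "w x \<ge> 1" if "x \<in> supp_nfd (Gamma_n g m \<phi>)" for x
    using that supp_nonneg by (auto simp: supp_m w_def)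
  have "nfd_dist (Gamma_n g n \<phi>) (Gamma_n g m \<phi>)
          \<le> (\<Sum>x\<in>supp_nfd (Gamma_n g m \<phi>). w x - 1)"
    unfolding Gamma_n_n using nfd_m w_ge w_pos by (rule nfd_dist_reweight_le)
  then show ?thesis by (simp add: supp_m w_def H_def)
qed

end
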